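(* Let $(X,\mu,H,\Pi,\mathcal{M}_0)$ be as in the Abstract Setting, and suppose there is $C<\infty$ with $\|\Pi f\|_{L^1(X,\mu)}\le C\|f\|_{L^1(X,\mu)}$ for all $f\in L^2(X,\mu)$. Then for every $x\in X$ there exists $\sigma_x\in\mathcal{M}_0$ such that $$\int_X f\,d\overline{\sigma_x}=f(x)\qquad\text{for all } f\in C(X)\cap H,$$ where $\overline{\sigma_x}$ denotes the complex conjugate measure.
   Context: Abstract Setting: $X$ is a compact connected Hausdorff space; $\mu$ is a finite regular Borel measure on $X$ of full support. $\mathcal{M}(X)$ is the space of regular complex Borel measures on $X$ (dual of $C(X)$) with the weak-$*$ topology; $L^1(X,\mu)\subset\mathcal{M}(X)$ via $f\mapsto f\,d\mu$. $H$ is a closed subspace of $L^2(X,\mu)$, $\Pi$ the orthogonal projection onto $H$, and $\mathcal{M}_0$ the weak-$*$ closure of $H$ in $\mathcal{M}(X)$. *)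

theory Defs
  imports "HOL-Analysis.Analysis"
begin

definition cfun :: "('a::topological_space \<Rightarrow> complex) set" where
  "cfun = {f. continuous_on UNIV f}"

definition sup_norm :: "('a \<Rightarrow> complex) \<Rightarrow> real" where
  "sup_norm f = (SUP x. cmod (f x))"

text \<open>M(X), the dual of C(X): bounded complex-linear functionals on C(X)
  (identified with regular complex Borel measures by the Riesz representation theorem).\<close>
definition meas_dual :: "(('a::topological_space \<Rightarrow> complex) \<Rightarrow> complex) set" where
  "meas_dual = {\<Lambda>. (\<forall>f\<in>cfun. \<forall>g\<in>cfun. \<forall>a b. \<Lambda> (\<lambda>x. a * f x + b * g x) = a * \<Lambda> f + b * \<Lambda> g)
                 \<and> (\<exists>B. \<forall>f\<in>cfun. cmod (\<Lambda> f) \<le> B * sup_norm f)}"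

definition regular_measure :: "'a::topological_space measure \<Rightarrow> bool" where
  "regular_measure M \<longleftrightarrow> (\<forall>A\<in>sets M.
       emeasure M A = (INF U\<in>{U. open U \<and> A \<subseteq> U}. emeasure M U) \<and>
       emeasure M A = (SUP K\<in>{K. compact K \<and> K \<subseteq> A}. emeasure M K))"

definition full_support :: "'a::topological_space measure \<Rightarrow> bool" where
  "full_support M \<longleftrightarrow> (\<forall>U. open U \<and> U \<noteq> {} \<longrightarrow> emeasure M U > 0)"

definition L2 :: "'a measure \<Rightarrow> ('a \<Rightarrow> complex) set" where
  "L2 M = {f. f \<in> borel_measurable M \<and> integrable M (\<lambda>x. (cmod (f x))\<^sup>2)}"

definition L1_norm :: "'a measure \<Rightarrow> ('a \<Rightarrow> complex) \<Rightarrow> real" where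
  "L1_norm M f = (LINT x|M. cmod (f x))"

definition L2_inner :: "'a measure \<Rightarrow> ('a \<Rightarrow> complex) \<Rightarrow> ('a \<Rightarrow> complex) \<Rightarrow> complex" where
  "L2_inner M f g = (LINT x|M. f x * cnj (g x))"

definition closed_L2_subspace :: "'a measure \<Rightarrow> ('a \<Rightarrow> complex) set \<Rightarrow> bool" where
  "closed_L2_subspace M H \<longleftrightarrow>
     H \<subseteq> L2 M \<and>
     (\<lambda>x. 0) \<in> H \<and>
     (\<forall>f\<in>H. \<forall>g\<in>H. \<forall>a b. (\<lambda>x. a * f x + b * g x) \<in> H) \<and>
     (\<forall>f\<in>H. \<forall>g\<in>L2 M. (AE x in M. g x = f x) \<longrightarrow> g \<in> H) \<and>
     (\<forall>h f. (\<forall>n. h n \<in> H) \<and> f \<in> L2 M \<and>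
            ((\<lambda>n. LINT x|M. (cmod (h n x - f x))\<^sup>2) \<longlonglongrightarrow> 0) \<longrightarrow> f \<in> H)"

definition orth_proj :: "'a measure \<Rightarrow> ('a \<Rightarrow> complex) set \<Rightarrow> (('a \<Rightarrow> complex) \<Rightarrow> ('a \<Rightarrow> complex)) \<Rightarrow> bool" where
  "orth_proj M H P \<longleftrightarrow>
     (\<forall>f\<in>L2 M. P f \<in> H \<and> (\<forall>h\<in>H. L2_inner M (\<lambda>x. f x - P f x) h = 0))"

definition L1_functional :: "'a measure \<Rightarrow> ('a \<Rightarrow> complex) \<Rightarrow> ('a \<Rightarrow> complex) \<Rightarrow> complex" where
  "L1_functional M h = (\<lambda>g. LINT x|M. g x * h x)"

text \<open>M_0: weak-* closure of H in M(X) (basic weak-* neighbourhoods are given by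
  finitely many continuous test functions and a tolerance).\<close>
definition wstar_closure :: "'a::topological_space measure \<Rightarrow> ('a \<Rightarrow> complex) set \<Rightarrow> (('a \<Rightarrow> complex) \<Rightarrow> complex) set" where
  "wstar_closure M H = {\<sigma>\<in>meas_dual. \<forall>F \<epsilon>. finite F \<and> F \<subseteq> cfun \<and> \<epsilon> > 0 \<longrightarrow>
       (\<exists>h\<in>H. \<forall>g\<in>F. cmod (\<sigma> g - L1_functional M h g) < \<epsilon>)}"

text \<open>Integral of f against the conjugate measure: \<integral> f d(conj \<sigma>) = conj (\<integral> conj f d\<sigma>).\<close>
definition conj_integral :: "(('a \<Rightarrow> complex) \<Rightarrow> complex) \<Rightarrow> ('a \<Rightarrow> complex) \<Rightarrow> complex" where
  "conj_integral \<sigma> f = cnj (\<sigma> (\<lambda>x. cnj (f x)))"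

end

theory Submission
  imports Defs
begin

(* Let \<psi>\<^sub>W = 1\<^sub>W / \<mu>(W) for open neighbourhoods W of x. The functionals
   \<Lambda>\<^sub>W g = \<integral> g \<Pi>\<psi>\<^sub>W d\<mu> are given by elements of H and, since \<psi>\<^sub>W has L1 norm 1, have
   norm at most C. By Tychonoff they have a weak-* cluster point \<sigma> as W shrinks to x,
   and \<sigma> lies in M\<^sub>0. For f in C(X) \<inter> H, orthogonality of \<psi>\<^sub>W - \<Pi>\<psi>\<^sub>W to H turns
   \<Lambda>\<^sub>W (conj f) into the average of conj f over W, which tends to conj (f x). *)

lemma cfun_norm_le_sup_norm:
  fixes g :: "'a::topological_space \<Rightarrow> complex"
  assumes "compact (UNIV :: 'a set)" "g \<in> cfun"
  shows "cmod (g y) \<le> sup_norm g"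
proof -
  have "compact (range g)"
    using assms by (intro compact_continuous_image) (auto simp: cfun_def)
  then have "bdd_above (range (\<lambda>y. cmod (g y)))"
    using bdd_above_norm[of "range g"] compact_imp_bounded by (simp add: image_comp o_def)
  then show ?thesis
    unfolding sup_norm_def by (intro cSUP_upper) simp_all
qed

lemma sup_norm_nonneg:
  fixes g :: "'a::topological_space \<Rightarrow> complex"
  shows "compact (UNIV :: 'a set) \<Longrightarrow> g \<in> cfun \<Longrightarrow> 0 \<le> sup_norm g"
  using cfun_norm_le_sup_norm[of g undefined] norm_ge_zero order_trans by blast

lemma cfun_linear_combination:
  "f \<in> cfun \<Longrightarrow> g \<in> cfun \<Longrightarrow> (\<lambda>y. a * f y + b * g y) \<in> cfun"
  by (auto simp: cfun_def intro!: continuous_intros)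

lemma cfun_cnj: "f \<in> cfun \<Longrightarrow> (\<lambda>y. cnj (f y)) \<in> cfun"
  by (auto simp: cfun_def intro!: continuous_intros)

lemma (in finite_measure) L2_imp_integrable:
  assumes "h \<in> L2 M"
  shows "integrable M h"
proof -
  have h: "h \<in> borel_measurable M" and sq: "integrable M (\<lambda>y. (cmod (h y))\<^sup>2)"
    using assms unfolding L2_def by blast+
  have "integrable M (\<lambda>y. cmod (h y))"
    by (rule square_integrable_imp_integrable[OF measurable_compose[OF h borel_measurable_norm] sq])
  then show ?thesis
    using h by (simp add: integrable_norm_iff)
qed

lemma integrable_bounded_mult:
  fixes g h :: "'a \<Rightarrow> complex"
  assumes "g \<in> borel_measurable M" "\<And>y. cmod (g y) \<le> B" "integrable M h"
  shows "integrable M (\<lambda>y. g y * h y)"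
proof (rule Bochner_Integration.integrable_bound)
  show "integrable M (\<lambda>y. B * cmod (h y))"
    using assms(3) by simp
  show "(\<lambda>y. g y * h y) \<in> borel_measurable M"
    using assms(1,3) by simp
  show "AE y in M. norm (g y * h y) \<le> norm (B * cmod (h y))"
  proof (rule AE_I2)
    fix y
    have "0 \<le> B"
      using assms(2)[of y] norm_ge_zero order_trans by blast
    then show "norm (g y * h y) \<le> norm (B * cmod (h y))"
      using mult_right_mono[OF assms(2) norm_ge_zero, of y "h y"] by (simp add: norm_mult)
  qed
qed

lemma norm_integral_bounded_mult_le:
  fixes g h :: "'a \<Rightarrow> complex"
  assumes "g \<in> borel_measurable M" "\<And>y. cmod (g y) \<le> B" "integrable M h"
  shows "cmod (LINT y|M. g y * h y) \<le> B * L1_norm M h"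
proof -
  have "cmod (LINT y|M. g y * h y) \<le> (LINT y|M. cmod (g y * h y))"
    by (rule integral_norm_bound)
  also have "\<dots> \<le> (LINT y|M. B * cmod (h y))"
  proof (rule integral_mono)
    show "integrable M (\<lambda>y. cmod (g y * h y))"
      using integrable_bounded_mult[OF assms] by (rule integrable_norm)
    show "integrable M (\<lambda>y. B * cmod (h y))"
      using assms(3) by simp
    show "cmod (g y * h y) \<le> B * cmod (h y)" for y
      using mult_right_mono[OF assms(2) norm_ge_zero, of y "h y"] by (simp add: norm_mult)
  qed
  finally show ?thesis
    by (simp add: L1_norm_def)
qed

definition normalized_indicator :: "'a measure \<Rightarrow> 'a set \<Rightarrow> 'a \<Rightarrow> complex" where
  "normalized_indicator M W = (\<lambda>y. indicator W y / measure M W)"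

lemma norm_normalized_indicator:
  "cmod (normalized_indicator M W y) = indicator W y / measure M W"
  by (simp add: normalized_indicator_def norm_divide indicator_def)

context finite_measure
begin

lemma integrable_normalized_indicator:
  "W \<in> sets M \<Longrightarrow> integrable M (normalized_indicator M W)"
  unfolding normalized_indicator_def by (simp add: less_top[symmetric])

lemma integral_normalized_indicator:
  "W \<in> sets M \<Longrightarrow> 0 < measure M W \<Longrightarrow> (LINT y|M. normalized_indicator M W y) = 1"
  unfolding normalized_indicator_def by simp

lemma L1_norm_normalized_indicator:
  "W \<in> sets M \<Longrightarrow> 0 < measure M W \<Longrightarrow> L1_norm M (normalized_indicator M W) = 1"
  by (simp add: L1_norm_def norm_normalized_indicator)

lemma normalized_indicator_in_L2:
  assumes "W \<in> sets M"
  shows "normalized_indicator M W \<in> L2 M"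
proof -
  have "(cmod (normalized_indicator M W y))\<^sup>2 = indicator W y / (measure M W)\<^sup>2" for y
    by (simp add: norm_normalized_indicator power_divide indicator_def)
  moreover have "integrable M (\<lambda>y. indicator W y / (measure M W)\<^sup>2 :: real)"
    using assms by (simp add: less_top[symmetric])
  moreover have "normalized_indicator M W \<in> borel_measurable M"
    using assms unfolding normalized_indicator_def by measurable
  ultimately show ?thesis
    by (simp add: L2_def)
qed

lemma norm_average_minus_le:
  fixes g :: "'a \<Rightarrow> complex"
  assumes W: "W \<in> sets M" "0 < measure M W" and g: "g \<in> borel_measurable M"
    and close: "\<And>y. y \<in> W \<Longrightarrow> cmod (g y - c) \<le> e"
  shows "cmod ((LINT y|M. g y * normalized_indicator M W y) - c) \<le> e"
proof -
  let ?\<psi> = "normalized_indicator M W"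
  have bound: "cmod ((g y - c) * ?\<psi> y) \<le> e * (indicator W y / measure M W)" for y
    using close[of y] W(2)
    by (cases "y \<in> W") (simp_all add: norm_mult norm_normalized_indicator divide_right_mono)
  have int_bound: "integrable M (\<lambda>y. e * (indicator W y / measure M W))"
    using W(1) by (simp add: less_top[symmetric])
  have int_diff: "integrable M (\<lambda>y. (g y - c) * ?\<psi> y)"
  proof (rule Bochner_Integration.integrable_bound[OF int_bound])
    show "(\<lambda>y. (g y - c) * ?\<psi> y) \<in> borel_measurable M"
      using g integrable_normalized_indicator[OF W(1)] by simp
    show "AE y in M. norm ((g y - c) * ?\<psi> y) \<le> norm (e * (indicator W y / measure M W))"
      using bound abs_ge_self order_trans unfolding real_norm_def by blast
  qed
  have int_const: "integrable M (\<lambda>y. c * ?\<psi> y)"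
    using integrable_normalized_indicator[OF W(1)] by simp
  have "(LINT y|M. g y * ?\<psi> y) - c = (LINT y|M. (g y - c) * ?\<psi> y + c * ?\<psi> y) - c"
    by (simp add: algebra_simps)
  also have "\<dots> = (LINT y|M. (g y - c) * ?\<psi> y)"
    using int_diff int_const integral_normalized_indicator[OF W] by simp
  finally have "cmod ((LINT y|M. g y * ?\<psi> y) - c) = cmod (LINT y|M. (g y - c) * ?\<psi> y)"
    by simp
  also have "\<dots> \<le> (LINT y|M. cmod ((g y - c) * ?\<psi> y))"
    by (rule integral_norm_bound)
  also have "\<dots> \<le> (LINT y|M. e * (indicator W y / measure M W))"
    using int_diff int_bound bound by (intro integral_mono) auto
  also have "\<dots> = e"
    using W by simp
  finally show ?thesis .
qed

end

lemma integral_cnj_mult_orth_proj: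
  assumes "orth_proj M H P" "\<phi> \<in> L2 M" "f \<in> H"
    and "integrable M (\<lambda>y. cnj (f y) * \<phi> y)" "integrable M (\<lambda>y. cnj (f y) * P \<phi> y)"
  shows "(LINT y|M. cnj (f y) * P \<phi> y) = (LINT y|M. cnj (f y) * \<phi> y)"
proof -
  have "0 = L2_inner M (\<lambda>y. \<phi> y - P \<phi> y) f"
    using assms(1-3) unfolding orth_proj_def by simp
  also have "\<dots> = (LINT y|M. cnj (f y) * \<phi> y - cnj (f y) * P \<phi> y)"
    unfolding L2_inner_def by (simp add: algebra_simps)
  also have "\<dots> = (LINT y|M. cnj (f y) * \<phi> y) - (LINT y|M. cnj (f y) * P \<phi> y)"
    using assms(4,5) by (rule Bochner_Integration.integral_diff)
  finally show ?thesis
    by simp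
qed

definition open_nbhds_in :: "'a::topological_space \<Rightarrow> 'a set \<Rightarrow> 'a set set" where
  "open_nbhds_in x V = {W. open W \<and> x \<in> W \<and> W \<subseteq> V}"

lemma compact_PiE_UNIV:
  fixes K :: "'i \<Rightarrow> 'b::topological_space set"
  assumes "\<And>i. compact (K i)"
  shows "compact (PiE UNIV K)"
proof -
  have "compactin (product_topology (\<lambda>_. euclidean) UNIV) (PiE UNIV K)"
    using assms by (simp add: compactin_PiE)
  then show ?thesis
    by (simp add: euclidean_product_topology)
qed

lemma compact_shrinking_nbhds_cluster_point:
  fixes L :: "'a::topological_space set \<Rightarrow> 'b::topological_space"
  assumes "compact K" and L_in_K: "\<And>W. open W \<Longrightarrow> x \<in> W \<Longrightarrow> L W \<in> K"
  obtains \<sigma> where "\<And>V. open V \<Longrightarrow> x \<in> V \<Longrightarrow> \<sigma> \<in> closure (L ` open_nbhds_in x V)"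
proof -
  define Fam where "Fam = (\<lambda>V. closure (L ` open_nbhds_in x V)) ` {V. open V \<and> x \<in> V}"
  have "K \<inter> \<Inter>Fam \<noteq> {}"
  proof (rule compact_imp_fip[OF \<open>compact K\<close>])
    show "closed T" if "T \<in> Fam" for T
      using that unfolding Fam_def by blast
    fix F assume "finite F" "F \<subseteq> Fam"
    then obtain VV where VV: "VV \<subseteq> {V. open V \<and> x \<in> V}" "finite VV"
      "F = (\<lambda>V. closure (L ` open_nbhds_in x V)) ` VV"
      unfolding Fam_def by (meson finite_subset_image)
    define V0 where "V0 = \<Inter>VV"
    have V0: "open V0" "x \<in> V0"
      using VV by (auto simp: V0_def)
    have "V0 \<in> open_nbhds_in x V" if "V \<in> VV" for V
      using V0 that by (auto simp: open_nbhds_in_def V0_def)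
    then have "L V0 \<in> \<Inter>F"
      using VV(3) closure_subset by blast
    then show "K \<inter> \<Inter>F \<noteq> {}"
      using L_in_K[OF V0] by blast
  qed
  then obtain \<sigma> where "\<sigma> \<in> \<Inter>Fam"
    by blast
  then show ?thesis
    by (intro that) (auto simp: Fam_def)
qed

lemma shrinking_nbhds_cluster_point_eval:
  fixes L :: "'a::topological_space set \<Rightarrow> 'g \<Rightarrow> 'b::metric_space"
  assumes cluster: "\<And>V. open V \<Longrightarrow> x \<in> V \<Longrightarrow> \<sigma> \<in> closure (L ` open_nbhds_in x V)"
    and close: "\<And>e. e > 0 \<Longrightarrow> \<exists>V. open V \<and> x \<in> V \<and> (\<forall>W\<in>open_nbhds_in x V. dist (L W g) c \<le> e)"
  shows "\<sigma> g = c"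
proof -
  have le: "dist (\<sigma> g) c \<le> e" if e: "e > 0" for e
  proof -
    obtain V where V: "open V" "x \<in> V" "\<forall>W\<in>open_nbhds_in x V. dist (L W g) c \<le> e"
      using close[OF e] by blast
    have "closed {\<Lambda>::'g \<Rightarrow> 'b. dist (\<Lambda> g) c \<le> e}"
      by (intro closed_Collect_le continuous_intros continuous_on_product_coordinates)
    then have "closure (L ` open_nbhds_in x V) \<subseteq> {\<Lambda>. dist (\<Lambda> g) c \<le> e}"
      using V(3) by (intro closure_minimal) auto
    then show ?thesis
      using cluster[OF V(1,2)] by blast
  qed
  show ?thesis
  proof (rule ccontr)
    assume "\<sigma> g \<noteq> c"
    then have "0 < dist (\<sigma> g) c"
      by simp
    then show False
      using le[of "dist (\<sigma> g) c / 2"] by simp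
  qed
qed

lemma closure_uniformly_bounded_subset_meas_dual:
  fixes S :: "(('a::topological_space \<Rightarrow> complex) \<Rightarrow> complex) set"
  assumes linear: "\<And>\<Lambda> f g a b. \<Lambda> \<in> S \<Longrightarrow> f \<in> cfun \<Longrightarrow> g \<in> cfun \<Longrightarrow>
      \<Lambda> (\<lambda>y. a * f y + b * g y) = a * \<Lambda> f + b * \<Lambda> g"
    and bounded: "\<And>\<Lambda> f. \<Lambda> \<in> S \<Longrightarrow> f \<in> cfun \<Longrightarrow> cmod (\<Lambda> f) \<le> B * sup_norm f"
  shows "closure S \<subseteq> meas_dual"
proof
  fix \<sigma> assume \<sigma>: "\<sigma> \<in> closure S"
  have "\<sigma> (\<lambda>y. a * f y + b * g y) = a * \<sigma> f + b * \<sigma> g" if "f \<in> cfun" "g \<in> cfun" for f g a b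
  proof -
    have "closed {\<Lambda>::('a \<Rightarrow> complex) \<Rightarrow> complex. \<Lambda> (\<lambda>y. a * f y + b * g y) = a * \<Lambda> f + b * \<Lambda> g}"
      by (intro closed_Collect_eq continuous_intros continuous_on_product_coordinates)
    then have "closure S \<subseteq> {\<Lambda>. \<Lambda> (\<lambda>y. a * f y + b * g y) = a * \<Lambda> f + b * \<Lambda> g}"
      using linear that by (intro closure_minimal) auto
    then show ?thesis
      using \<sigma> by blast
  qed
  moreover have "cmod (\<sigma> f) \<le> B * sup_norm f" if "f \<in> cfun" for f
  proof -
    have "closed {\<Lambda>::('a \<Rightarrow> complex) \<Rightarrow> complex. cmod (\<Lambda> f) \<le> B * sup_norm f}"
      by (intro closed_Collect_le continuous_intros continuous_on_product_coordinates)
    then have "closure S \<subseteq> {\<Lambda>. cmod (\<Lambda> f) \<le> B * sup_norm f}"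
      using bounded that by (intro closure_minimal) auto
    then show ?thesis
      using \<sigma> by blast
  qed
  ultimately show "\<sigma> \<in> meas_dual"
    unfolding meas_dual_def by blast
qed

lemma closure_L1_functionals_subset_wstar_closure:
  assumes "\<And>\<Lambda>. \<Lambda> \<in> S \<Longrightarrow> \<exists>h\<in>H. \<forall>g\<in>cfun. \<Lambda> g = L1_functional M h g"
  shows "closure S \<inter> meas_dual \<subseteq> wstar_closure M H"
proof
  fix \<sigma> assume \<sigma>: "\<sigma> \<in> closure S \<inter> meas_dual"
  have "\<exists>h\<in>H. \<forall>g\<in>F. cmod (\<sigma> g - L1_functional M h g) < \<epsilon>"
    if F: "finite F" "F \<subseteq> cfun" and "\<epsilon> > 0" for F \<epsilon>
  proof -
    define N where "N = {\<Lambda>. \<forall>g\<in>F. \<Lambda> (id g) \<in> ball (\<sigma> g) \<epsilon>}"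
    have "open N"
      unfolding N_def using product_topology_basis'[OF F(1), of "\<lambda>g. ball (\<sigma> g) \<epsilon>" id] by simp
    moreover have "\<sigma> \<in> N"
      using \<open>\<epsilon> > 0\<close> by (auto simp: N_def)
    ultimately have "N \<inter> S \<noteq> {}"
      using \<sigma> open_Int_closure_eq_empty[of N S] by blast
    then obtain \<Lambda> where "\<Lambda> \<in> S" "\<Lambda> \<in> N"
      by blast
    then obtain h where "h \<in> H" "\<forall>g\<in>F. \<Lambda> g = L1_functional M h g"
      using assms F(2) by blast
    with \<open>\<Lambda> \<in> N\<close> show ?thesis
      by (auto simp: N_def dist_norm norm_minus_commute)
  qed
  with \<sigma> show "\<sigma> \<in> wstar_closure M H"
    unfolding wstar_closure_def by blast
qed

locale L1_bounded_projection =
  fixes M :: "'a::topological_space measure" and H :: "('a \<Rightarrow> complex) set"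
    and P :: "('a \<Rightarrow> complex) \<Rightarrow> 'a \<Rightarrow> complex" and C :: real
  assumes compact_space: "compact (UNIV :: 'a set)"
    and sets_M: "sets M = sets borel"
    and finite_M: "emeasure M UNIV < \<infinity>"
    and full_support_M: "full_support M"
    and closed_subspace: "closed_L2_subspace M H"
    and orth_proj_P: "orth_proj M H P"
    and L1_bound: "\<forall>f\<in>L2 M. L1_norm M (P f) \<le> C * L1_norm M f"
begin

lemma space_M [simp]: "space M = UNIV"
  using sets_eq_imp_space_eq[OF sets_M] by simp

sublocale finite_measure M
  by (rule finite_measureI) (use finite_M in simp)

lemma open_in_sets_M: "open U \<Longrightarrow> U \<in> sets M"
  using sets_M by simp

lemma measure_open_pos: "open W \<Longrightarrow> x \<in> W \<Longrightarrow> 0 < measure M W"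
  using full_support_M emeasure_eq_measure[of W] by (auto simp: full_support_def)

lemma cfun_measurable: "g \<in> cfun \<Longrightarrow> g \<in> borel_measurable M"
  unfolding measurable_cong_sets[OF sets_M refl] cfun_def
  by (auto intro: borel_measurable_continuous_onI)

definition proj_avg_functional :: "'a set \<Rightarrow> ('a \<Rightarrow> complex) \<Rightarrow> complex" where
  "proj_avg_functional W g =
     (if g \<in> cfun then L1_functional M (P (normalized_indicator M W)) g else 0)"

lemma proj_normalized_indicator_in_H: "open W \<Longrightarrow> P (normalized_indicator M W) \<in> H"
  using orth_proj_P normalized_indicator_in_L2[OF open_in_sets_M] by (simp add: orth_proj_def)

lemma proj_avg_functional_L1_functional:
  "open W \<Longrightarrow> \<exists>h\<in>H. \<forall>g\<in>cfun. proj_avg_functional W g = L1_functional M h g"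
  using proj_normalized_indicator_in_H by (auto simp: proj_avg_functional_def)

lemma integrable_proj_normalized_indicator:
  assumes "open W"
  shows "integrable M (P (normalized_indicator M W))"
proof (rule L2_imp_integrable)
  have "H \<subseteq> L2 M"
    using closed_subspace unfolding closed_L2_subspace_def by (rule conjunct1)
  then show "P (normalized_indicator M W) \<in> L2 M"
    using proj_normalized_indicator_in_H[OF assms] by blast
qed

lemma L1_norm_proj_normalized_indicator_le:
  assumes "open W" "x \<in> W"
  shows "L1_norm M (P (normalized_indicator M W)) \<le> C"
  using L1_bound normalized_indicator_in_L2[OF open_in_sets_M[OF assms(1)]]
    L1_norm_normalized_indicator[OF open_in_sets_M[OF assms(1)] measure_open_pos[OF assms]]
  by auto

lemma norm_proj_avg_functional_le:
  assumes "open W" "x \<in> W" "g \<in> cfun"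
  shows "cmod (proj_avg_functional W g) \<le> C * sup_norm g"
proof -
  have "cmod (proj_avg_functional W g) \<le> sup_norm g * L1_norm M (P (normalized_indicator M W))"
    unfolding proj_avg_functional_def L1_functional_def
    using assms(3) norm_integral_bounded_mult_le[OF cfun_measurable
        cfun_norm_le_sup_norm[OF compact_space] integrable_proj_normalized_indicator[OF assms(1)]]
    by simp
  also have "\<dots> \<le> sup_norm g * C"
    using L1_norm_proj_normalized_indicator_le[OF assms(1,2)] sup_norm_nonneg[OF compact_space assms(3)]
    by (rule mult_left_mono)
  finally show ?thesis
    by (simp add: mult.commute)
qed

lemma proj_avg_functional_linear:
  assumes "open W" "f \<in> cfun" "g \<in> cfun"
  shows "proj_avg_functional W (\<lambda>y. a * f y + b * g y)
    = a * proj_avg_functional W f + b * proj_avg_functional W g"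
proof -
  let ?h = "P (normalized_indicator M W)"
  have "integrable M (\<lambda>y. f y * ?h y)" "integrable M (\<lambda>y. g y * ?h y)"
    using assms by (auto intro!: integrable_bounded_mult cfun_measurable
        cfun_norm_le_sup_norm[OF compact_space] integrable_proj_normalized_indicator)
  then have "(LINT y|M. (a * f y + b * g y) * ?h y)
      = a * (LINT y|M. f y * ?h y) + b * (LINT y|M. g y * ?h y)"
    by (simp add: distrib_right mult.assoc)
  then show ?thesis
    using assms cfun_linear_combination[OF assms(2,3)]
    by (simp add: proj_avg_functional_def L1_functional_def)
qed

lemma proj_avg_functional_cnj_close:
  assumes "f \<in> cfun" "f \<in> H" "open W" "x \<in> W"
    and close: "\<And>y. y \<in> W \<Longrightarrow> cmod (f y - f x) \<le> e"
  shows "cmod (proj_avg_functional W (\<lambda>y. cnj (f y)) - cnj (f x)) \<le> e"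
proof -
  let ?\<psi> = "normalized_indicator M W"
  have W: "W \<in> sets M" "0 < measure M W"
    using open_in_sets_M measure_open_pos assms(3,4) by auto
  have f_cnj: "(\<lambda>y. cnj (f y)) \<in> cfun"
    using assms(1) by (rule cfun_cnj)
  have bounded: "cmod (cnj (f y)) \<le> sup_norm (\<lambda>y. cnj (f y))" for y
    using cfun_norm_le_sup_norm[OF compact_space f_cnj] .
  \<comment> \<open>\<open>\<psi> - P \<psi>\<close> is orthogonal to \<open>f \<in> H\<close>, so P may be dropped\<close>
  have "proj_avg_functional W (\<lambda>y. cnj (f y)) = (LINT y|M. cnj (f y) * ?\<psi> y)"
    unfolding proj_avg_functional_def L1_functional_def using f_cnj
    by (simp add: integral_cnj_mult_orth_proj[OF orth_proj_P normalized_indicator_in_L2[OF W(1)]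
          assms(2) integrable_bounded_mult[OF cfun_measurable[OF f_cnj] bounded]
          integrable_bounded_mult[OF cfun_measurable[OF f_cnj] bounded]]
        integrable_normalized_indicator[OF W(1)] integrable_proj_normalized_indicator[OF assms(3)])
  also have "cmod (\<dots> - cnj (f x)) \<le> e"
    using close by (intro norm_average_minus_le[OF W cfun_measurable[OF f_cnj]])
      (metis complex_cnj_diff complex_mod_cnj)
  finally show ?thesis .
qed

lemma proj_avg_functional_cluster_point:
  obtains \<sigma> where "\<And>V. open V \<Longrightarrow> x \<in> V \<Longrightarrow> \<sigma> \<in> closure (proj_avg_functional ` open_nbhds_in x V)"
proof -
  define K :: "(('a \<Rightarrow> complex) \<Rightarrow> complex) set"
    where "K = PiE UNIV (\<lambda>g. cball 0 (if g \<in> cfun then C * sup_norm g else 0))"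
  have "compact K"
    unfolding K_def by (intro compact_PiE_UNIV) simp
  moreover have "proj_avg_functional W \<in> K" if "open W" "x \<in> W" for W
    using norm_proj_avg_functional_le[OF that]
    unfolding K_def PiE_iff by (simp add: proj_avg_functional_def)
  ultimately show ?thesis
    using compact_shrinking_nbhds_cluster_point that by metis
qed

lemma proj_avg_functional_cnj_converges:
  assumes "f \<in> cfun" "f \<in> H" "e > 0"
  shows "\<exists>V. open V \<and> x \<in> V \<and>
    (\<forall>W\<in>open_nbhds_in x V. dist (proj_avg_functional W (\<lambda>y. cnj (f y))) (cnj (f x)) \<le> e)"
proof (intro exI conjI ballI)
  let ?V = "{y. dist (f y) (f x) < e}"
  show "open ?V"
    using assms(1) unfolding cfun_def by (intro open_Collect_less continuous_intros) auto
  show "x \<in> ?V"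
    using assms(3) by simp
  fix W assume "W \<in> open_nbhds_in x ?V"
  then show "dist (proj_avg_functional W (\<lambda>y. cnj (f y))) (cnj (f x)) \<le> e"
    unfolding open_nbhds_in_def dist_norm
    by (auto intro!: proj_avg_functional_cnj_close[OF assms(1,2)] simp: dist_norm less_imp_le)
qed

end

theorem lemma3p2:
  fixes M :: "'a::t2_space measure"
    and H :: "('a \<Rightarrow> complex) set"
    and P :: "('a \<Rightarrow> complex) \<Rightarrow> ('a \<Rightarrow> complex)"
    and C :: real
  assumes "compact (UNIV :: 'a set)" and "connected (UNIV :: 'a set)"
    and "sets M = sets borel"
    and "emeasure M UNIV < \<infinity>"
    and "regular_measure M"
    and "full_support M"
    and "closed_L2_subspace M H"
    and "orth_proj M H P"
    and "\<forall>f\<in>L2 M. L1_norm M (P f) \<le> C * L1_norm M f"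
  shows "\<forall>x. \<exists>\<sigma>\<in>wstar_closure M H.
           \<forall>f. f \<in> cfun \<and> f \<in> H \<longrightarrow> conj_integral \<sigma> f = f x"
proof
  fix x :: 'a
  interpret L1_bounded_projection M H P C
    by unfold_locales (use assms in blast)+
  let ?\<Lambda> = proj_avg_functional
  obtain \<sigma> where
    \<sigma>: "\<And>V. open V \<Longrightarrow> x \<in> V \<Longrightarrow> \<sigma> \<in> closure (?\<Lambda> ` open_nbhds_in x V)"
    using proj_avg_functional_cluster_point[of x] by blast
  let ?S = "?\<Lambda> ` open_nbhds_in x UNIV"
  have "\<sigma> \<in> closure ?S"
    using \<sigma>[of UNIV] by simp
  moreover have "closure ?S \<subseteq> meas_dual"
    by (rule closure_uniformly_bounded_subset_meas_dual[where B = C])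
      (auto simp: open_nbhds_in_def proj_avg_functional_linear norm_proj_avg_functional_le)
  moreover have "closure ?S \<inter> meas_dual \<subseteq> wstar_closure M H"
    by (rule closure_L1_functionals_subset_wstar_closure)
      (auto simp: open_nbhds_in_def intro: proj_avg_functional_L1_functional)
  ultimately have "\<sigma> \<in> wstar_closure M H"
    by blast
  moreover have "\<sigma> (\<lambda>y. cnj (f y)) = cnj (f x)" if "f \<in> cfun" "f \<in> H" for f
    using \<sigma> proj_avg_functional_cnj_converges[OF that]
    by (rule shrinking_nbhds_cluster_point_eval[where L = ?\<Lambda>])
  ultimately show "\<exists>\<sigma>\<in>wstar_closure M H. \<forall>f. f \<in> cfun \<and> f \<in> H \<longrightarrow> conj_integral \<sigma> f = f x"
    by (intro bexI[of _ \<sigma>]) (auto simp: conj_integral_def)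
qed

end
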